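(* Let $p$ be an odd prime. If $M$ and $N$ are discrete $A$-modules and $f:M\to N$ is a $\mathbb{Z}_{(p)}$-homomorphism which commutes with the action of $\Psi^q$, then $f$ is a homomorphism of $A$-modules.
   Context: $A$ is the ring of degree zero stable operations in $p$-local complex $K$-theory. Fix $q$ primitive mod $p^2$, $\Psi^q\in A$ the Adams operation, $q_i=q^{(-1)^i\lfloor i/2\rfloor}$, $\Theta_n(X)=\prod_{i=1}^n(X-q_i)$, $\Phi_n=\Theta_n(\Psi^q)$; every element of $A$ is uniquely a convergent sum $\sum_{n\ge0}a_n\Phi_n$ with $a_n\in\mathbb{Z}_{(p)}$, and $A_m=\{\sum_{n\ge m}a_n\Phi_n\}$. An $A$-module $M$ is discrete if each $x\in M$ satisfies $A_nx=0$ for some $n$. *)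

theory Defs
  imports "HOL-Number_Theory.Number_Theory" "HOL-Computational_Algebra.Polynomial"
begin

definition Zp :: "nat \<Rightarrow> rat set" where
  "Zp p = {r. \<not> int p dvd snd (quotient_of r)}"

definition qi :: "nat \<Rightarrow> nat \<Rightarrow> rat" where
  "qi q i = (if even i then of_nat q ^ (i div 2) else inverse (of_nat q) ^ (i div 2))"

definition Theta :: "nat \<Rightarrow> nat \<Rightarrow> rat poly" where
  "Theta q n = (\<Prod>i=1..n. [: - qi q i, 1 :])"

text \<open>Elements of A are represented by their coefficient sequences
  a : nat \<Rightarrow> rat, standing for sum_n a_n Phi_n with a_n in Z_(p).\<close>
definition Acar :: "nat \<Rightarrow> (nat \<Rightarrow> rat) set" where
  "Acar p = {a. \<forall>n. a n \<in> Zp p}"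

definition Afilt :: "nat \<Rightarrow> nat \<Rightarrow> (nat \<Rightarrow> rat) set" where
  "Afilt p m = {a \<in> Acar p. \<forall>k<m. a k = 0}"

definition trunc_poly :: "nat \<Rightarrow> (nat \<Rightarrow> rat) \<Rightarrow> nat \<Rightarrow> rat poly" where
  "trunc_poly q a k = (\<Sum>n\<le>k. smult (a n) (Theta q n))"

text \<open>Ring structure of A: addition is coefficientwise; the Phi_k-coefficient
  of a product is the Theta_k-coefficient (in the Newton basis) of the product of
  the truncations modulo Theta_(k+1), i.e. computed in A/A_(k+1) = Z_(p)[X]/(Theta_(k+1)).\<close>
definition mulA :: "nat \<Rightarrow> (nat \<Rightarrow> rat) \<Rightarrow> (nat \<Rightarrow> rat) \<Rightarrow> (nat \<Rightarrow> rat)" where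
  "mulA q a b = (\<lambda>k. coeff ((trunc_poly q a k * trunc_poly q b k) mod Theta q (Suc k)) k)"

definition addA :: "(nat \<Rightarrow> rat) \<Rightarrow> (nat \<Rightarrow> rat) \<Rightarrow> (nat \<Rightarrow> rat)" where
  "addA a b = (\<lambda>k. a k + b k)"

definition scalA :: "rat \<Rightarrow> (nat \<Rightarrow> rat)" where
  "scalA r = (\<lambda>k. if k = 0 then r else 0)"

text \<open>The Adams operation Psi^q = Phi_1 + q_1 Phi_0 (q_1 = 1).\<close>
definition PsiA :: "nat \<Rightarrow> (nat \<Rightarrow> rat)" where
  "PsiA q = (\<lambda>k. if k = 0 then qi q 1 else if k = 1 then 1 else 0)"

definition A_module :: "nat \<Rightarrow> nat \<Rightarrow> ((nat \<Rightarrow> rat) \<Rightarrow> 'm::ab_group_add \<Rightarrow> 'm) \<Rightarrow> bool" where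
  "A_module p q act \<longleftrightarrow>
     (\<forall>a\<in>Acar p. \<forall>x y. act a (x + y) = act a x + act a y) \<and>
     (\<forall>a\<in>Acar p. \<forall>b\<in>Acar p. \<forall>x. act (addA a b) x = act a x + act b x) \<and>
     (\<forall>a\<in>Acar p. \<forall>b\<in>Acar p. \<forall>x. act (mulA q a b) x = act a (act b x)) \<and>
     (\<forall>x. act (scalA 1) x = x)"

definition discrete_A_module :: "nat \<Rightarrow> nat \<Rightarrow> ((nat \<Rightarrow> rat) \<Rightarrow> 'm::ab_group_add \<Rightarrow> 'm) \<Rightarrow> bool" where
  "discrete_A_module p q act \<longleftrightarrow>
     A_module p q act \<and> (\<forall>x. \<exists>n. \<forall>a\<in>Afilt p n. act a x = 0)"

end

theory Submission
  imports Defs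
begin

text \<open>The operations commuting with f contain the scalars and \<Psi>^q and are closed under
  sums and products. Since \<Phi>_0 = 1 and \<Phi>_(k+1) = (\<Psi>^q - q_(k+1)) \<Phi>_k with q_(k+1) a p-local
  integer, they include every finite sum \<Sum>_(k<n) a_k \<Phi>_k. On a fixed element x of a discrete
  module, an arbitrary a \<in> A acts like such a truncation as soon as A_n kills x; taking n
  large for both x and f x gives f (a x) = a (f x).\<close>

lemma mem_Zp_iff:
  "r \<in> Zp p \<longleftrightarrow> (\<exists>a b. b \<noteq> 0 \<and> \<not> int p dvd b \<and> r = of_int a / of_int b)"
proof
  assume "r \<in> Zp p"
  obtain n d where nd: "quotient_of r = (n, d)" by (cases "quotient_of r")
  then show "\<exists>a b. b \<noteq> 0 \<and> \<not> int p dvd b \<and> r = of_int a / of_int b"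
    using \<open>r \<in> Zp p\<close> quotient_of_div[OF nd] quotient_of_denom_pos[OF nd]
    by (intro exI[of _ n] exI[of _ d]) (auto simp: Zp_def)
next
  assume "\<exists>a b. b \<noteq> 0 \<and> \<not> int p dvd b \<and> r = of_int a / of_int b"
  then obtain a b where ab: "b \<noteq> 0" "\<not> int p dvd b" "r = of_int a / of_int b" by blast
  obtain n d where nd: "quotient_of r = (n, d)" by (cases "quotient_of r")
  have "(of_int a :: rat) * of_int d = of_int n * of_int b"
    using ab quotient_of_div[OF nd] quotient_of_denom_pos[OF nd] by (simp add: field_simps)
  then have "d dvd n * b"
    by (metis dvd_triv_right of_int_eq_iff of_int_mult)
  then have "d dvd b"
    using quotient_of_coprime[OF nd] by (meson coprime_commute coprime_dvd_mult_right_iff)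
  with ab(2) have "\<not> int p dvd d" using dvd_trans by blast
  then show "r \<in> Zp p" by (simp add: Zp_def nd)
qed

lemma of_int_in_Zp: "prime p \<Longrightarrow> of_int k \<in> Zp p"
  using prime_gt_1_nat[of p] by (simp add: Zp_def)

lemma zero_in_Zp: "prime p \<Longrightarrow> 0 \<in> Zp p"
  using of_int_in_Zp[of p 0] by simp

lemma one_in_Zp: "prime p \<Longrightarrow> 1 \<in> Zp p"
  using of_int_in_Zp[of p 1] by simp

lemma Zp_uminus:
  assumes "r \<in> Zp p"
  shows "- r \<in> Zp p"
proof -
  obtain a b where "b \<noteq> 0" "\<not> int p dvd b" "r = of_int a / of_int b"
    using assms mem_Zp_iff by blast
  then show ?thesis
    using mem_Zp_iff[of "- r"] by (metis minus_divide_left of_int_minus)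
qed

lemma Zp_add:
  assumes "prime p" "r \<in> Zp p" "s \<in> Zp p"
  shows "r + s \<in> Zp p"
proof -
  obtain a b where ab: "b \<noteq> 0" "\<not> int p dvd b" "r = of_int a / of_int b"
    using assms(2) mem_Zp_iff by blast
  obtain c d where cd: "d \<noteq> 0" "\<not> int p dvd d" "s = of_int c / of_int d"
    using assms(3) mem_Zp_iff by blast
  have "r + s = of_int (a * d + c * b) / of_int (b * d)"
    unfolding ab(3) cd(3) using ab(1) cd(1) by (simp add: field_simps)
  moreover have "\<not> int p dvd b * d"
    using ab cd assms(1) by (simp add: prime_dvd_mult_iff)
  ultimately show ?thesis
    using ab cd mem_Zp_iff by (metis mult_eq_0_iff)
qed

lemma qi_in_Zp:
  assumes "prime p" "\<not> p dvd q"
  shows "qi q i \<in> Zp p"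
proof (cases "even i")
  case True
  then have "qi q i = of_int (int q ^ (i div 2))" by (simp add: qi_def)
  then show ?thesis by (simp only: of_int_in_Zp[OF assms(1)])
next
  case False
  then have "qi q i = of_int 1 / of_int (int q ^ (i div 2))"
    by (simp add: qi_def power_one_over divide_inverse power_inverse)
  moreover have "\<not> int p dvd int q ^ (i div 2)"
    using assms by (metis int_dvd_int_iff of_nat_power prime_dvd_power prime_nat_int_transfer)
  ultimately show ?thesis
    using mem_Zp_iff by (metis dvd_0_right)
qed

lemma residue_primroot_prime_square_not_dvd:
  assumes "prime p" "residue_primroot (p\<^sup>2) q"
  shows "\<not> p dvd q"
proof
  assume "p dvd q"
  moreover have "coprime (p\<^sup>2) q" using assms(2) by (simp add: residue_primroot_def)
  ultimately have "coprime p p"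
    by (metis coprime_commute coprime_mult_left_iff coprime_mult_right_iff dvd_def power2_eq_square)
  with assms(1) show False by (simp add: prime_gt_1_nat)
qed

lemma qi_1 [simp]: "qi q 1 = 1" "qi q (Suc 0) = 1"
  by (simp_all add: qi_def)

lemma Theta_0 [simp]: "Theta q 0 = 1"
  by (simp add: Theta_def)

lemma Theta_Suc: "Theta q (Suc n) = Theta q n * [:- qi q (Suc n), 1:]"
  by (simp add: Theta_def prod.cl_ivl_Suc)

lemma Theta_1 [simp]: "Theta q (Suc 0) = [:-1, 1:]"
  using Theta_Suc[of q 0] by simp

lemma degree_Theta [simp]: "degree (Theta q n) = n"
  unfolding Theta_def by (subst degree_prod_sum_eq) auto

lemma lead_coeff_Theta [simp]: "lead_coeff (Theta q n) = 1"
  unfolding Theta_def lead_coeff_prod by simp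

lemma coeff_Theta_ge:
  "k \<le> j \<Longrightarrow> coeff (Theta q k) j = (if j = k then 1 else 0)"
  using lead_coeff_Theta[of q k] by (auto intro: coeff_eq_0)

lemma degree_trunc_poly: "degree (trunc_poly q a k) \<le> k"
  unfolding trunc_poly_def
  by (rule degree_sum_le) (auto intro: order.trans[OF degree_smult_le])

lemma coeff_trunc_poly_top: "coeff (trunc_poly q a k) k = a k"
proof -
  have "coeff (trunc_poly q a k) k = (\<Sum>n\<le>k. if n = k then a k else 0)"
    unfolding trunc_poly_def coeff_sum coeff_smult
    by (intro sum.cong) (auto simp: coeff_Theta_ge)
  then show ?thesis by simp
qed

lemma mulA_eqI:
  assumes "\<And>j. [trunc_poly q a j * trunc_poly q b j = trunc_poly q c j] (mod Theta q (Suc j))"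
  shows "mulA q a b = c"
proof
  fix j
  have "degree (trunc_poly q c j) < degree (Theta q (Suc j))"
    using degree_trunc_poly[of q c j] by simp
  then have "(trunc_poly q a j * trunc_poly q b j) mod Theta q (Suc j) = trunc_poly q c j"
    using assms[of j] by (simp add: cong_def mod_poly_less)
  then show "mulA q a b j = c j"
    by (simp add: mulA_def coeff_trunc_poly_top)
qed

definition PhiA :: "nat \<Rightarrow> rat \<Rightarrow> nat \<Rightarrow> rat" where
  "PhiA k c = (\<lambda>n. if n = k then c else 0)"

definition truncA :: "nat \<Rightarrow> (nat \<Rightarrow> rat) \<Rightarrow> nat \<Rightarrow> rat" where
  "truncA n a = (\<lambda>k. if k < n then a k else 0)"

lemma PhiA_in_Acar: "prime p \<Longrightarrow> c \<in> Zp p \<Longrightarrow> PhiA k c \<in> Acar p"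
  by (simp add: PhiA_def Acar_def zero_in_Zp)

lemma truncA_in_Acar: "prime p \<Longrightarrow> a \<in> Acar p \<Longrightarrow> truncA n a \<in> Acar p"
  by (simp add: truncA_def Acar_def zero_in_Zp)

lemma scalA_eq_PhiA: "scalA c = PhiA 0 c"
  by (simp add: scalA_def PhiA_def fun_eq_iff)

lemma truncA_Suc: "truncA (Suc n) a = addA (truncA n a) (PhiA n (a n))"
  by (auto simp: truncA_def addA_def PhiA_def fun_eq_iff)

lemma trunc_poly_addA: "trunc_poly q (addA a b) j = trunc_poly q a j + trunc_poly q b j"
  by (simp add: trunc_poly_def addA_def smult_add_left sum.distrib)

lemma trunc_poly_PhiA:
  "trunc_poly q (PhiA k c) j = (if k \<le> j then smult c (Theta q k) else 0)"
proof -
  have "trunc_poly q (PhiA k c) j = (\<Sum>n\<le>j. if n = k then smult c (Theta q n) else 0)"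
    unfolding trunc_poly_def PhiA_def by (intro sum.cong) auto
  then show ?thesis by simp
qed

lemma trunc_poly_PsiA_minus:
  "trunc_poly q (addA (PsiA q) (scalA (- r))) j = (if j = 0 then [:1 - r:] else [:- r, 1:])"
proof -
  have "addA (PsiA q) (scalA (- r)) = addA (PhiA 0 (1 - r)) (PhiA 1 1)"
    by (auto simp: addA_def PsiA_def scalA_def PhiA_def fun_eq_iff)
  then show ?thesis
    by (simp add: trunc_poly_addA trunc_poly_PhiA)
qed

lemma mulA_scalA_PhiA: "mulA q (scalA c) (PhiA k 1) = PhiA k c"
  by (rule mulA_eqI) (simp add: scalA_eq_PhiA trunc_poly_PhiA)

lemma mulA_PsiA_minus_PhiA:
  "mulA q (addA (PsiA q) (scalA (- qi q (Suc k)))) (PhiA k 1) = PhiA (Suc k) 1"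
proof (rule mulA_eqI)
  fix j
  consider "j < k" | "j = k" | "k < j" by linarith
  then show "[trunc_poly q (addA (PsiA q) (scalA (- qi q (Suc k)))) j * trunc_poly q (PhiA k 1) j
      = trunc_poly q (PhiA (Suc k) 1) j] (mod Theta q (Suc j))"
  proof cases
    case 1
    then show ?thesis by (simp add: trunc_poly_PhiA)
  next
    case 2
    then show ?thesis
      by (cases k) (simp_all add: trunc_poly_PsiA_minus trunc_poly_PhiA Theta_Suc cong_0_iff)
  next
    case 3
    then show ?thesis
      by (simp add: trunc_poly_PsiA_minus trunc_poly_PhiA Theta_Suc mult.commute)
  qed
qed

lemma scalA_in_Acar: "prime p \<Longrightarrow> r \<in> Zp p \<Longrightarrow> scalA r \<in> Acar p"
  by (simp add: scalA_eq_PhiA PhiA_in_Acar)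

lemma PsiA_in_Acar: "prime p \<Longrightarrow> PsiA q \<in> Acar p"
  by (simp add: PsiA_def Acar_def zero_in_Zp one_in_Zp)

lemma addA_in_Acar: "prime p \<Longrightarrow> a \<in> Acar p \<Longrightarrow> b \<in> Acar p \<Longrightarrow> addA a b \<in> Acar p"
  by (simp add: addA_def Acar_def Zp_add)

lemma A_module_act_addA:
  "A_module p q act \<Longrightarrow> a \<in> Acar p \<Longrightarrow> b \<in> Acar p \<Longrightarrow> act (addA a b) x = act a x + act b x"
  by (simp add: A_module_def)

lemma A_module_act_mulA:
  "A_module p q act \<Longrightarrow> a \<in> Acar p \<Longrightarrow> b \<in> Acar p \<Longrightarrow> act (mulA q a b) x = act a (act b x)"
  by (simp add: A_module_def)

lemma discrete_act_eq_act_truncA: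
  assumes "discrete_A_module p q act" "prime p" "a \<in> Acar p"
  shows "\<exists>n. \<forall>m\<ge>n. act a x = act (truncA m a) x"
proof -
  obtain n where n: "\<forall>b\<in>Afilt p n. act b x = 0"
    using assms(1) by (auto simp: discrete_A_module_def)
  have "act a x = act (truncA m a) x" if "n \<le> m" for m
  proof -
    define tail where "tail = (\<lambda>k. if k < m then 0 else a k)"
    have tail: "tail \<in> Afilt p n"
      using assms(2,3) that by (auto simp: tail_def Afilt_def Acar_def zero_in_Zp)
    have module: "A_module p q act"
      using assms(1) by (simp add: discrete_A_module_def)
    have "addA (truncA m a) tail = a"
      by (simp add: truncA_def tail_def addA_def fun_eq_iff)
    then have "act a x = act (addA (truncA m a) tail) x"
      by simp
    also have "\<dots> = act (truncA m a) x + act tail x"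
      using A_module_act_addA[OF module truncA_in_Acar[OF assms(2,3)]] tail
      by (simp add: Afilt_def)
    also have "\<dots> = act (truncA m a) x"
      using n tail by simp
    finally show ?thesis .
  qed
  then show ?thesis by blast
qed

locale Psi_commuting_map =
  fixes p q :: nat
    and actM :: "(nat \<Rightarrow> rat) \<Rightarrow> 'm::ab_group_add \<Rightarrow> 'm"
    and actN :: "(nat \<Rightarrow> rat) \<Rightarrow> 'n::ab_group_add \<Rightarrow> 'n"
    and f :: "'m \<Rightarrow> 'n"
  assumes prime: "prime p"
    and not_dvd: "\<not> p dvd q"
    and module_M: "A_module p q actM"
    and module_N: "A_module p q actN"
    and f_add: "\<And>x y. f (x + y) = f x + f y"
    and f_scalA: "\<And>r x. r \<in> Zp p \<Longrightarrow> f (actM (scalA r) x) = actN (scalA r) (f x)"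
    and f_PsiA: "\<And>x. f (actM (PsiA q) x) = actN (PsiA q) (f x)"
begin

definition commutes :: "(nat \<Rightarrow> rat) \<Rightarrow> bool" where
  "commutes a \<longleftrightarrow> (\<forall>x. f (actM a x) = actN a (f x))"

lemma commutes_addA:
  "a \<in> Acar p \<Longrightarrow> b \<in> Acar p \<Longrightarrow> commutes a \<Longrightarrow> commutes b \<Longrightarrow> commutes (addA a b)"
  by (simp add: commutes_def A_module_act_addA[OF module_M] A_module_act_addA[OF module_N] f_add)

lemma commutes_mulA:
  "a \<in> Acar p \<Longrightarrow> b \<in> Acar p \<Longrightarrow> commutes a \<Longrightarrow> commutes b \<Longrightarrow> commutes (mulA q a b)"
  by (simp add: commutes_def A_module_act_mulA[OF module_M] A_module_act_mulA[OF module_N])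

lemma commutes_scalA: "r \<in> Zp p \<Longrightarrow> commutes (scalA r)"
  by (simp add: commutes_def f_scalA)

lemma commutes_PsiA_minus:
  assumes "r \<in> Zp p"
  shows "commutes (addA (PsiA q) (scalA (- r)))"
proof (rule commutes_addA)
  show "PsiA q \<in> Acar p" "scalA (- r) \<in> Acar p"
    using assms prime by (simp_all add: PsiA_in_Acar scalA_in_Acar Zp_uminus)
  show "commutes (PsiA q)"
    by (simp add: commutes_def f_PsiA)
  show "commutes (scalA (- r))"
    using assms by (simp add: commutes_scalA Zp_uminus)
qed

lemma commutes_PhiA_1: "commutes (PhiA k 1)"
proof (induction k)
  case 0
  show ?case
    using commutes_scalA[OF one_in_Zp[OF prime]] by (simp add: scalA_eq_PhiA)
next
  case (Suc k)
  have "qi q (Suc k) \<in> Zp p"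
    using qi_in_Zp[OF prime not_dvd] .
  then have "commutes (mulA q (addA (PsiA q) (scalA (- qi q (Suc k)))) (PhiA k 1))"
    using prime Suc
    by (intro commutes_mulA commutes_PsiA_minus)
      (simp_all add: addA_in_Acar PsiA_in_Acar scalA_in_Acar Zp_uminus PhiA_in_Acar one_in_Zp)
  then show ?case
    by (simp only: mulA_PsiA_minus_PhiA)
qed

lemma commutes_PhiA:
  assumes "c \<in> Zp p"
  shows "commutes (PhiA k c)"
proof -
  have "commutes (mulA q (scalA c) (PhiA k 1))"
    using assms prime
    by (intro commutes_mulA commutes_scalA commutes_PhiA_1)
      (simp_all add: scalA_in_Acar PhiA_in_Acar one_in_Zp)
  then show ?thesis
    by (simp only: mulA_scalA_PhiA)
qed

lemma commutes_truncA:
  assumes "a \<in> Acar p"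
  shows "commutes (truncA n a)"
proof (induction n)
  case 0
  have "truncA 0 a = PhiA 0 0"
    by (simp add: truncA_def PhiA_def fun_eq_iff)
  then show ?case
    using commutes_PhiA zero_in_Zp[OF prime] by simp
next
  case (Suc n)
  have "a n \<in> Zp p"
    using assms by (simp add: Acar_def)
  then show ?case
    unfolding truncA_Suc
    using Suc assms prime by (simp add: commutes_addA commutes_PhiA truncA_in_Acar PhiA_in_Acar)
qed

end

theorem lemma2p6:
  fixes p q :: nat
    and actM :: "(nat \<Rightarrow> rat) \<Rightarrow> 'm::ab_group_add \<Rightarrow> 'm"
    and actN :: "(nat \<Rightarrow> rat) \<Rightarrow> 'n::ab_group_add \<Rightarrow> 'n"
    and f :: "'m \<Rightarrow> 'n"
  assumes "prime p" and "odd p"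
    and "residue_primroot (p^2) q"
    and "discrete_A_module p q actM"
    and "discrete_A_module p q actN"
    and "\<And>x y. f (x + y) = f x + f y"
    and "\<And>r x. r \<in> Zp p \<Longrightarrow> f (actM (scalA r) x) = actN (scalA r) (f x)"
    and "\<And>x. f (actM (PsiA q) x) = actN (PsiA q) (f x)"
  shows "\<forall>a\<in>Acar p. \<forall>x. f (actM a x) = actN a (f x)"
proof (intro ballI allI)
  interpret Psi_commuting_map p q actM actN f
    using assms residue_primroot_prime_square_not_dvd
    by unfold_locales (auto simp: discrete_A_module_def)
  fix a x
  assume a: "a \<in> Acar p"
  obtain n1 where n1: "\<forall>m\<ge>n1. actM a x = actM (truncA m a) x"
    using discrete_act_eq_act_truncA[OF assms(4,1) a] by blast
  obtain n2 where n2: "\<forall>m\<ge>n2. actN a (f x) = actN (truncA m a) (f x)"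
    using discrete_act_eq_act_truncA[OF assms(5,1) a] by blast
  define m where "m = max n1 n2"
  have "f (actM a x) = f (actM (truncA m a) x)"
    using n1 m_def by (metis max.cobounded1)
  also have "\<dots> = actN (truncA m a) (f x)"
    using commutes_truncA[OF a] by (simp add: commutes_def)
  also have "\<dots> = actN a (f x)"
    using n2 m_def by (metis max.cobounded2)
  finally show "f (actM a x) = actN a (f x)" .
qed

end
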